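(* For any solution $(w,F)\in X\times\mathbb R$ of the height equation, with $h=H+w$ and $\eta(q)=w(q,0)$, $$\frac1{F^2}\Big[\int_{-1}^0|\rho_p|\,w(0,p)^2\,dp+\rho(0)\eta(0)^2\Big]=\int_{-1}^0\frac{w_p(0,p)^2}{H_p(p)^2\,h_p(0,p)}\,dp.$$
   Context: Fix $\alpha\in(0,1)$, $\rho\in C^{2+\alpha}([-1,0])$ with $\rho>0$, $\rho_p\le0$, and $H\in C^{3+\alpha}([-1,0])$ with $H(-1)=0$, $H(0)=1$, $H_p>0$. Let $R=\mathbb R\times(-1,0)$ (coordinates $(q,p)$), $T=\mathbb R\times\{0\}$, $B=\mathbb R\times\{-1\}$. $(w,F)$ solves the height equation if $h=H+w$ satisfies $\big(-\frac{1+h_q^2}{2h_p^2}+\frac1{2H_p^2}\big)_p+\big(\frac{h_q}{h_p}\big)_q-\frac1{F^2}\rho_p(h-H)=0$ in $R$, $\frac{1+h_q^2}{2h_p^2}-\frac1{2H_p^2}+\frac1{F^2}\rho(h-1)=0$ on $T$, $h=0$ on $B$, and $0<\inf_R(H_p+w_p)<\infty$. $X$: $w\in C^{3+\alpha}(\overline R)$ of finite norm, even in $q$, with $w$ and derivatives of order $\le2$ tending to $0$ uniformly as $|q|\to\infty$, $w=0$ on $B$. *)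

theory Defs
  imports "HOL-Analysis.Analysis"
begin

definition strip_cl :: "(real \<times> real) set" where
  "strip_cl = {(q,p). -1 \<le> p \<and> p \<le> 0}"

definition dP :: "(real \<Rightarrow> real) \<Rightarrow> real \<Rightarrow> real" where
  "dP g p = vector_derivative g (at p within {-1..0})"

definition pq :: "(real \<Rightarrow> real \<Rightarrow> real) \<Rightarrow> real \<Rightarrow> real \<Rightarrow> real" where
  "pq f q p = deriv (\<lambda>x. f x p) q"

definition pp :: "(real \<Rightarrow> real \<Rightarrow> real) \<Rightarrow> real \<Rightarrow> real \<Rightarrow> real" where
  "pp f q p = vector_derivative (\<lambda>y. f q y) (at p within {-1..0})"

text \<open>Iterated partial derivative; True = d/dq, False = d/dp (applied right to left).\<close>
fun pd :: "bool list \<Rightarrow> (real \<Rightarrow> real \<Rightarrow> real) \<Rightarrow> real \<Rightarrow> real \<Rightarrow> real" where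
  "pd [] f = f"
| "pd (True # ds) f = pq (pd ds f)"
| "pd (False # ds) f = pp (pd ds f)"

definition diff_dir :: "bool \<Rightarrow> (real \<Rightarrow> real \<Rightarrow> real) \<Rightarrow> real \<Rightarrow> real \<Rightarrow> bool" where
  "diff_dir d f q p = (if d then (\<lambda>x. f x p) differentiable (at q)
                       else (\<lambda>y. f q y) differentiable (at p within {-1..0}))"

definition holder_strip :: "nat \<Rightarrow> real \<Rightarrow> (real \<Rightarrow> real \<Rightarrow> real) \<Rightarrow> bool" where
  "holder_strip k \<alpha> f \<longleftrightarrow>
     (\<forall>ds d q p. length ds < k \<and> -1 \<le> p \<and> p \<le> 0 \<longrightarrow> diff_dir d (pd ds f) q p) \<and>
     (\<forall>ds. length ds \<le> k \<longrightarrow>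
        continuous_on strip_cl (\<lambda>(q,p). pd ds f q p) \<and>
        bounded ((\<lambda>(q,p). pd ds f q p) ` strip_cl)) \<and>
     (\<forall>ds. length ds = k \<longrightarrow> (\<exists>C. \<forall>x\<in>strip_cl. \<forall>y\<in>strip_cl.
        \<bar>pd ds f (fst x) (snd x) - pd ds f (fst y) (snd y)\<bar> \<le> C * dist x y powr \<alpha>))"

definition holder_int :: "nat \<Rightarrow> real \<Rightarrow> (real \<Rightarrow> real) \<Rightarrow> bool" where
  "holder_int k \<alpha> g \<longleftrightarrow>
     (\<forall>n<k. \<forall>p\<in>{-1..0}. ((dP ^^ n) g) differentiable (at p within {-1..0})) \<and>
     (\<forall>n\<le>k. continuous_on {-1..0} ((dP ^^ n) g)) \<and>
     (\<exists>C. \<forall>x\<in>{-1..0}. \<forall>y\<in>{-1..0}. \<bar>(dP ^^ k) g x - (dP ^^ k) g y\<bar> \<le> C * \<bar>x - y\<bar> powr \<alpha>)"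

definition in_X :: "real \<Rightarrow> (real \<Rightarrow> real \<Rightarrow> real) \<Rightarrow> bool" where
  "in_X \<alpha> w \<longleftrightarrow>
     holder_strip 3 \<alpha> w \<and>
     (\<forall>q p. -1 \<le> p \<and> p \<le> 0 \<longrightarrow> w (-q) p = w q p) \<and>
     (\<forall>ds. length ds \<le> 2 \<longrightarrow> (\<forall>\<epsilon>>0. \<exists>M. \<forall>q p. M \<le> \<bar>q\<bar> \<and> -1 \<le> p \<and> p \<le> 0 \<longrightarrow>
        \<bar>pd ds w q p\<bar> < \<epsilon>)) \<and>
     (\<forall>q. w q (-1) = 0)"

text \<open>(w,F) solves the height equation (F \<noteq> 0 is implicit in the 1/F^2 terms).\<close>
definition height_eq :: "(real \<Rightarrow> real) \<Rightarrow> (real \<Rightarrow> real) \<Rightarrow> (real \<Rightarrow> real \<Rightarrow> real) \<Rightarrow> real \<Rightarrow> bool" where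
  "height_eq \<rho> H w F \<longleftrightarrow>
    (let h = (\<lambda>q p. H p + w q p);
         A = (\<lambda>q p. - (1 + (pq h q p)^2) / (2 * (pp h q p)^2) + 1 / (2 * (dP H p)^2));
         B = (\<lambda>q p. pq h q p / pp h q p)
     in F \<noteq> 0 \<and>
        (\<forall>q p. -1 < p \<and> p < 0 \<longrightarrow>
           pp A q p + pq B q p - 1 / F^2 * dP \<rho> p * (h q p - H p) = 0) \<and>
        (\<forall>q. (1 + (pq h q 0)^2) / (2 * (pp h q 0)^2) - 1 / (2 * (dP H 0)^2)
              + 1 / F^2 * \<rho> 0 * (h q 0 - 1) = 0) \<and>
        (\<forall>q. h q (-1) = 0) \<and>
        (\<exists>c>0. \<forall>q p. -1 < p \<and> p < 0 \<longrightarrow> c \<le> pp h q p))"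

end

theory Submission
  imports Defs
begin

(* For each q consider the flux
     Phi(q) = integral over [-1,0] of  w_q^2/(2 h_p) - w_p^2/(2 h_p H_p^2) - rho_p w^2/(2 F^2)
              + rho(0) w(q,0)^2/(2 F^2).
   Differentiating in q, the height equation in divergence form turns the integrand into the exact
   p-derivative -(w_q A)_p, where A is the p-flux of the equation. The contribution of the bed
   vanishes since w = 0 there, and the one of the free surface cancels the derivative of the
   surface term because of the Bernoulli condition. Hence Phi is constant, and since w and its
   first derivatives decay as |q| -> infinity, Phi = 0. At the crest q = 0 evenness kills w_q,
   and Phi(0) = 0 is the claimed identity. *)

lemma mixed_partials_commute:
  fixes f fx fy fxy fyx :: "real \<Rightarrow> real \<Rightarrow> real"
  assumes "lo < p" "p < hi"
    and fx: "\<And>x y. lo < y \<Longrightarrow> y < hi \<Longrightarrow> ((\<lambda>x. f x y) has_real_derivative fx x y) (at x)"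
    and fy: "\<And>x y. lo < y \<Longrightarrow> y < hi \<Longrightarrow> ((\<lambda>y. f x y) has_real_derivative fy x y) (at y)"
    and fxy: "\<And>x y. lo < y \<Longrightarrow> y < hi \<Longrightarrow> ((\<lambda>y. fx x y) has_real_derivative fxy x y) (at y)"
    and fyx: "\<And>x y. lo < y \<Longrightarrow> y < hi \<Longrightarrow> ((\<lambda>x. fy x y) has_real_derivative fyx x y) (at x)"
    and cont_xy: "isCont (\<lambda>z. fxy (fst z) (snd z)) (q, p)"
    and cont_yx: "isCont (\<lambda>z. fyx (fst z) (snd z)) (q, p)"
  shows "fxy q p = fyx q p"
proof -
  have "\<bar>fxy q p - fyx q p\<bar> < 2 * e" if "e > 0" for e
  proof -
    obtain d1 where d1: "d1 > 0" "\<And>z. dist z (q, p) < d1 \<Longrightarrow> \<bar>fxy (fst z) (snd z) - fxy q p\<bar> < e"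
      using cont_xy \<open>e > 0\<close> unfolding continuous_at_eps_delta dist_real_def by fastforce
    obtain d2 where d2: "d2 > 0" "\<And>z. dist z (q, p) < d2 \<Longrightarrow> \<bar>fyx (fst z) (snd z) - fyx q p\<bar> < e"
      using cont_yx \<open>e > 0\<close> unfolding continuous_at_eps_delta dist_real_def by fastforce
    define m where "m = min (min d1 d2) (min (p - lo) (hi - p))"
    have "0 < m" "m \<le> d1" "m \<le> d2" "m \<le> hi - p"
      using d1 d2 assms(1,2) unfolding m_def by auto
    define s where "s = m / 2"
    have s: "s > 0" "2 * s \<le> d1" "2 * s \<le> d2" "p + s < hi"
      using \<open>0 < m\<close> \<open>m \<le> d1\<close> \<open>m \<le> d2\<close> \<open>m \<le> hi - p\<close> unfolding s_def by linarith+
    have near: "dist (x, y) (q, p) < 2 * s" if "q < x" "x < q + s" "p < y" "y < p + s" for x y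
    proof -
      have "dist (x, y) (q, p) = sqrt ((x - q)\<^sup>2 + (y - p)\<^sup>2)"
        by (simp add: dist_Pair_Pair dist_real_def)
      also have "\<dots> \<le> \<bar>x - q\<bar> + \<bar>y - p\<bar>" by (rule sqrt_sum_squares_le_sum_abs)
      finally show ?thesis using that by linarith
    qed
    text \<open>Two iterated mean value theorems, in either order, for the same second difference
      \<open>f (q+s) (p+s) - f (q+s) p - f q (p+s) + f q p\<close>.\<close>
    have "\<exists>\<xi>>q. \<xi> < q + s \<and> (f (q+s) (p+s) - f (q+s) p) - (f q (p+s) - f q p)
        = (q + s - q) * (fx \<xi> (p+s) - fx \<xi> p)"
      by (rule MVT2) (use s assms(1) in \<open>auto intro!: derivative_eq_intros fx\<close>)
    then obtain \<xi> where \<xi>: "q < \<xi>" "\<xi> < q + s"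
      "(f (q+s) (p+s) - f (q+s) p) - (f q (p+s) - f q p) = s * (fx \<xi> (p+s) - fx \<xi> p)"
      by auto
    have "\<exists>\<eta>>p. \<eta> < p + s \<and> fx \<xi> (p+s) - fx \<xi> p = (p + s - p) * fxy \<xi> \<eta>"
      by (rule MVT2) (use s assms(1) in \<open>auto intro!: fxy\<close>)
    then obtain \<eta> where \<eta>: "p < \<eta>" "\<eta> < p + s" "fx \<xi> (p+s) - fx \<xi> p = s * fxy \<xi> \<eta>"
      by auto
    have "\<exists>\<eta>'>p. \<eta>' < p + s \<and> (f (q+s) (p+s) - f q (p+s)) - (f (q+s) p - f q p)
        = (p + s - p) * (fy (q+s) \<eta>' - fy q \<eta>')"
      by (rule MVT2) (use s assms(1) in \<open>auto intro!: derivative_eq_intros fy\<close>)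
    then obtain \<eta>' where \<eta>': "p < \<eta>'" "\<eta>' < p + s"
      "(f (q+s) (p+s) - f q (p+s)) - (f (q+s) p - f q p) = s * (fy (q+s) \<eta>' - fy q \<eta>')"
      by auto
    have "\<exists>\<xi>'>q. \<xi>' < q + s \<and> fy (q+s) \<eta>' - fy q \<eta>' = (q + s - q) * fyx \<xi>' \<eta>'"
      by (rule MVT2) (use s \<eta>' assms(1) in \<open>auto intro!: fyx\<close>)
    then obtain \<xi>' where \<xi>': "q < \<xi>'" "\<xi>' < q + s" "fy (q+s) \<eta>' - fy q \<eta>' = s * fyx \<xi>' \<eta>'"
      by auto
    have "s * (s * fxy \<xi> \<eta>) = s * (s * fyx \<xi>' \<eta>')"
      using \<xi> \<eta> \<eta>' \<xi>' by (simp add: algebra_simps)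
    then have "fxy \<xi> \<eta> = fyx \<xi>' \<eta>'" using s(1) by simp
    moreover have "\<bar>fxy \<xi> \<eta> - fxy q p\<bar> < e" using d1(2)[of "(\<xi>, \<eta>)"] near[of \<xi> \<eta>] \<xi> \<eta> s by simp
    moreover have "\<bar>fyx \<xi>' \<eta>' - fyx q p\<bar> < e" using d2(2)[of "(\<xi>', \<eta>')"] near[of \<xi>' \<eta>'] \<xi>' \<eta>' s by simp
    ultimately show ?thesis by linarith
  qed
  from this[of "\<bar>fxy q p - fyx q p\<bar> / 2"] show ?thesis by fastforce
qed

lemma even_fun_deriv_zero:
  fixes f :: "real \<Rightarrow> real"
  assumes even: "\<And>x. f (- x) = f x" and D: "(f has_real_derivative D) (at 0)"
  shows "D = 0"
proof -
  have "((\<lambda>x. f (- x)) has_real_derivative - D) (at 0)"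
    using D DERIV_mirror[where f=f and x=0 and y=D] by simp
  then have "(f has_real_derivative - D) (at 0)" by (simp add: even)
  with D have "D = - D" by (rule DERIV_unique)
  then show ?thesis by simp
qed

lemma eq_0_if_abs_le_squares:
  fixes x C :: real
  assumes "\<And>e. e > 0 \<Longrightarrow> \<bar>x\<bar> \<le> e\<^sup>2 * C"
  shows "x = 0"
proof (rule ccontr)
  assume "x \<noteq> 0"
  define e where "e = sqrt (\<bar>x\<bar> / (\<bar>C\<bar> + 1))"
  have "e > 0" "e\<^sup>2 = \<bar>x\<bar> / (\<bar>C\<bar> + 1)" using \<open>x \<noteq> 0\<close> unfolding e_def by auto
  then have "\<bar>x\<bar> \<le> \<bar>x\<bar> / (\<bar>C\<bar> + 1) * \<bar>C\<bar>"
    using assms[of e] by (smt (verit) mult_left_mono divide_nonneg_pos abs_ge_zero)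
  moreover have "\<bar>x\<bar> / (\<bar>C\<bar> + 1) * \<bar>C\<bar> < \<bar>x\<bar>" using \<open>x \<noteq> 0\<close> by (simp add: field_simps)
  ultimately show False by linarith
qed

lemma continuous_on_slice:
  assumes "continuous_on (UNIV \<times> S) (\<lambda>z. f (fst z) (snd z))"
  shows "continuous_on S (f q)"
proof -
  have "continuous_on S ((\<lambda>z. f (fst z) (snd z)) \<circ> Pair q)"
    by (rule continuous_on_compose) (auto intro!: continuous_intros continuous_on_subset[OF assms])
  then show ?thesis by (simp add: o_def)
qed

lemma holder_int_has_derivative:
  assumes "holder_int k \<alpha> g" "n < k" "p \<in> {-1..0}"
  shows "((dP ^^ n) g has_real_derivative (dP ^^ Suc n) g p) (at p within {-1..0})"
proof -
  have "((dP ^^ n) g) differentiable (at p within {-1..0})"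
    using assms unfolding holder_int_def by blast
  then show ?thesis unfolding has_real_derivative_iff_has_vector_derivative
    by (simp add: dP_def vector_derivative_works[symmetric])
qed

lemma holder_int_continuous_on:
  assumes "holder_int k \<alpha> g" "n \<le> k"
  shows "continuous_on {-1..0} ((dP ^^ n) g)"
  using assms unfolding holder_int_def by blast

lemma holder_strip_has_derivative_q:
  assumes "holder_strip k \<alpha> f" "length ds < k" "p \<in> {-1..0}"
  shows "((\<lambda>x. pd ds f x p) has_real_derivative pd (True # ds) f q p) (at q)"
proof -
  have "\<forall>ds d q p. length ds < k \<and> -1 \<le> p \<and> p \<le> 0 \<longrightarrow> diff_dir d (pd ds f) q p"
    using assms(1) unfolding holder_strip_def by blast
  then have "diff_dir True (pd ds f) q p" using assms(2,3) by simp
  then have "(\<lambda>x. pd ds f x p) differentiable (at q)" by (simp add: diff_dir_def)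
  then show ?thesis by (simp add: pq_def DERIV_deriv_iff_real_differentiable)
qed

lemma holder_strip_has_derivative_p:
  assumes "holder_strip k \<alpha> f" "length ds < k" "p \<in> {-1..0}"
  shows "((\<lambda>y. pd ds f q y) has_real_derivative pd (False # ds) f q p) (at p within {-1..0})"
proof -
  have "\<forall>ds d q p. length ds < k \<and> -1 \<le> p \<and> p \<le> 0 \<longrightarrow> diff_dir d (pd ds f) q p"
    using assms(1) unfolding holder_strip_def by blast
  then have "diff_dir False (pd ds f) q p" using assms(2,3) by simp
  then have "(\<lambda>y. pd ds f q y) differentiable (at p within {-1..0})" by (simp add: diff_dir_def)
  then show ?thesis unfolding has_real_derivative_iff_has_vector_derivative
    by (simp add: pp_def vector_derivative_works[symmetric])
qed

lemma holder_strip_has_derivative_p_interior: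
  assumes "holder_strip k \<alpha> f" "length ds < k" "p \<in> {-1<..<0}"
  shows "((\<lambda>y. pd ds f q y) has_real_derivative pd (False # ds) f q p) (at p)"
proof -
  have "p \<in> interior {-1..0}" using assms(3) by (simp add: interior_atLeastAtMost_real)
  then have "at p within {-1..0} = at p" by (rule at_within_interior)
  moreover have "p \<in> {-1..0}" using assms(3) by simp
  ultimately show ?thesis using holder_strip_has_derivative_p[OF assms(1,2)] by metis
qed

lemma holder_strip_continuous_on:
  assumes "holder_strip k \<alpha> f" "length ds \<le> k"
  shows "continuous_on (UNIV \<times> {-1..0}) (\<lambda>z. pd ds f (fst z) (snd z))"
proof -
  have "\<forall>ds. length ds \<le> k \<longrightarrow> continuous_on strip_cl (\<lambda>(q, p). pd ds f q p)"
    using assms(1) unfolding holder_strip_def by blast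
  moreover have "strip_cl = UNIV \<times> {-1..0}" by (auto simp: strip_cl_def)
  ultimately show ?thesis using assms(2) by (simp add: case_prod_beta)
qed

lemma abs_flux_density_terms_le:
  fixes c m b d r K a P x e F :: real
  assumes "c > 0" "m > 0" "c \<le> b" "m \<le> d" "\<bar>r\<bar> \<le> K"
    and "\<bar>a\<bar> \<le> e" "\<bar>P\<bar> \<le> e" "\<bar>x\<bar> \<le> e" "F \<noteq> 0"
  shows "\<bar>a\<^sup>2 / (2 * b) - P\<^sup>2 / (2 * b * d\<^sup>2) - r * x\<^sup>2 / (2 * F\<^sup>2)\<bar>
    \<le> e\<^sup>2 * (1 / (2 * c) + 1 / (2 * c * m\<^sup>2) + K / (2 * F\<^sup>2))"
proof -
  have sq: "a\<^sup>2 \<le> e\<^sup>2" "P\<^sup>2 \<le> e\<^sup>2" "x\<^sup>2 \<le> e\<^sup>2"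
    using assms(6-8) by (metis abs_ge_zero order_trans power2_abs power_mono)+
  have "c * m\<^sup>2 \<le> b * d\<^sup>2" using assms(1-4) by (intro mult_mono power_mono) auto
  then have P: "P\<^sup>2 / (2 * b * d\<^sup>2) \<le> e\<^sup>2 / (2 * c * m\<^sup>2)"
    using sq assms(1,2) by (intro frac_le) auto
  have a: "a\<^sup>2 / (2 * b) \<le> e\<^sup>2 / (2 * c)" using sq assms(1,3) by (intro frac_le) auto
  have x: "\<bar>r * x\<^sup>2 / (2 * F\<^sup>2)\<bar> \<le> K * e\<^sup>2 / (2 * F\<^sup>2)"
    using assms(5) sq by (auto simp: abs_mult intro!: divide_right_mono mult_mono)
  have nonneg: "0 \<le> a\<^sup>2 / (2 * b)" "0 \<le> P\<^sup>2 / (2 * b * d\<^sup>2)" using assms(1-4) by auto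
  have "\<bar>a\<^sup>2 / (2 * b) - P\<^sup>2 / (2 * b * d\<^sup>2) - r * x\<^sup>2 / (2 * F\<^sup>2)\<bar>
      \<le> e\<^sup>2 / (2 * c) + e\<^sup>2 / (2 * c * m\<^sup>2) + K * e\<^sup>2 / (2 * F\<^sup>2)"
    by (intro abs_leI) (use P a nonneg abs_le_D1[OF x] abs_le_D2[OF x] in linarith)+
  also have "\<dots> = e\<^sup>2 * (1 / (2 * c) + 1 / (2 * c * m\<^sup>2) + K / (2 * F\<^sup>2))"
    by (simp add: algebra_simps)
  finally show ?thesis .
qed

lemma has_real_derivative_bernoulli_term:
  fixes a b c :: "real \<Rightarrow> real"
  assumes "(a has_real_derivative a') (at p within S)" "(b has_real_derivative b') (at p within S)"
    and "(c has_real_derivative c') (at p within S)" "b p \<noteq> 0" "c p \<noteq> 0"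
  shows "((\<lambda>y. - (1 + (a y)\<^sup>2) / (2 * (b y)\<^sup>2) + 1 / (2 * (c y)\<^sup>2)) has_real_derivative
    - (a p * a') / (b p)\<^sup>2 + (1 + (a p)\<^sup>2) * b' / (b p)^3 - c' / (c p)^3) (at p within S)"
  using assms by (auto intro!: derivative_eq_intros simp: field_simps power2_eq_square power3_eq_cube)

lemma has_real_derivative_flux_density_term:
  fixes a b P v :: "real \<Rightarrow> real"
  assumes "(a has_real_derivative a') (at q)" "(b has_real_derivative b') (at q)"
    and "(P has_real_derivative P') (at q)" "(v has_real_derivative v') (at q)"
    and "b q \<noteq> 0" "c \<noteq> 0" "F \<noteq> 0"
  shows "((\<lambda>x. (a x)\<^sup>2 / (2 * b x) - (P x)\<^sup>2 / (2 * b x * c\<^sup>2) - r * (v x)\<^sup>2 / (2 * F\<^sup>2))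
    has_real_derivative a q * a' / b q - (a q)\<^sup>2 * b' / (2 * (b q)\<^sup>2) - P q * P' / (b q * c\<^sup>2)
      + (P q)\<^sup>2 * b' / (2 * (b q)\<^sup>2 * c\<^sup>2) - r * v q * v' / F\<^sup>2) (at q)"
  using assms by (auto intro!: derivative_eq_intros simp: field_simps power2_eq_square)

lemma flux_exactness_identity:
  fixes b c F a a' b' P r v :: real
  assumes "b \<noteq> 0" "c \<noteq> 0" "F \<noteq> 0" "b = c + P"
  shows "b' * (- (1 + a\<^sup>2) / (2 * b\<^sup>2) + 1 / (2 * c\<^sup>2)) + a * (- (a' / b - a * b' / b\<^sup>2) + 1 / F\<^sup>2 * r * v)
    = - (a * a' / b - a\<^sup>2 * b' / (2 * b\<^sup>2) - P * b' / (b * c\<^sup>2) + P\<^sup>2 * b' / (2 * b\<^sup>2 * c\<^sup>2)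
      - r * v * a / F\<^sup>2)"
proof -
  have P: "P = b - c" using assms(4) by simp
  show ?thesis unfolding P using assms(1-3) by (simp add: field_simps power2_eq_square)
qed

locale height_solution =
  fixes \<alpha> F :: real and \<rho> H :: "real \<Rightarrow> real" and w :: "real \<Rightarrow> real \<Rightarrow> real"
  assumes rho_holder: "holder_int 2 \<alpha> \<rho>" and rho_p_nonpos: "\<forall>p\<in>{-1..0}. dP \<rho> p \<le> 0"
    and H_holder: "holder_int 3 \<alpha> H" and H_top: "H 0 = 1" and H_p_pos: "\<forall>p\<in>{-1..0}. dP H p > 0"
    and w_in_X: "in_X \<alpha> w" and solves_height_eq: "height_eq \<rho> H w F"
begin

abbreviation h :: "real \<Rightarrow> real \<Rightarrow> real" where "h \<equiv> \<lambda>q p. H p + w q p"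

lemma w_holder: "holder_strip 3 \<alpha> w"
  using w_in_X unfolding in_X_def by blast

lemma w_even: "p \<in> {-1..0} \<Longrightarrow> w (- q) p = w q p"
  using w_in_X unfolding in_X_def by auto

lemma w_bottom: "w q (-1) = 0"
  using w_in_X unfolding in_X_def by blast

lemma w_partials_vanish_at_infinity:
  assumes "length ds \<le> 2" "e > 0"
  obtains M where "\<And>q p. M \<le> \<bar>q\<bar> \<Longrightarrow> p \<in> {-1..0} \<Longrightarrow> \<bar>pd ds w q p\<bar> < e"
  using w_in_X assms unfolding in_X_def by (metis atLeastAtMost_iff)

lemma F_nonzero: "F \<noteq> 0"
  using solves_height_eq unfolding height_eq_def Let_def by blast

lemma H_p_nonzero: "p \<in> {-1..0} \<Longrightarrow> dP H p \<noteq> 0"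
  using H_p_pos by force

lemmas w_has_derivative_q = holder_strip_has_derivative_q[OF w_holder, of "[]", simplified]
lemmas w_q_has_derivative_q = holder_strip_has_derivative_q[OF w_holder, of "[True]", simplified]
lemmas w_p_has_derivative_q = holder_strip_has_derivative_q[OF w_holder, of "[False]", simplified]
lemmas w_has_derivative_p = holder_strip_has_derivative_p[OF w_holder, of "[]", simplified]
lemmas w_q_has_derivative_p = holder_strip_has_derivative_p[OF w_holder, of "[True]", simplified]
lemmas w_p_has_derivative_p = holder_strip_has_derivative_p[OF w_holder, of "[False]", simplified]
lemmas w_has_derivative_p_interior =
  holder_strip_has_derivative_p_interior[OF w_holder, of "[]", simplified]
lemmas w_q_has_derivative_p_interior =
  holder_strip_has_derivative_p_interior[OF w_holder, of "[True]", simplified]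

lemmas continuous_w = holder_strip_continuous_on[OF w_holder, of "[]", simplified]
lemmas continuous_w_q = holder_strip_continuous_on[OF w_holder, of "[True]", simplified]
lemmas continuous_w_p = holder_strip_continuous_on[OF w_holder, of "[False]", simplified]
lemmas continuous_w_qq = holder_strip_continuous_on[OF w_holder, of "[True, True]", simplified]
lemmas continuous_w_pq = holder_strip_continuous_on[OF w_holder, of "[True, False]", simplified]
lemmas continuous_w_qp = holder_strip_continuous_on[OF w_holder, of "[False, True]", simplified]

lemmas H_has_derivative = holder_int_has_derivative[OF H_holder, of 0, simplified]
lemmas H_p_has_derivative = holder_int_has_derivative[OF H_holder, of 1, simplified]

lemmas continuous_on_H_p = holder_int_continuous_on[OF H_holder, of 1, simplified]
lemmas continuous_on_rho_p = holder_int_continuous_on[OF rho_holder, of 1, simplified]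

lemma continuous_H_p: "continuous_on (UNIV \<times> {-1..0}) (\<lambda>z. dP H (snd z))"
  by (rule continuous_on_compose2[OF continuous_on_H_p]) (auto intro!: continuous_intros)

lemma continuous_rho_p: "continuous_on (UNIV \<times> {-1..0}) (\<lambda>z. dP \<rho> (snd z))"
  by (rule continuous_on_compose2[OF continuous_on_rho_p]) (auto intro!: continuous_intros)

definition h_p :: "real \<Rightarrow> real \<Rightarrow> real" where "h_p q p = dP H p + pp w q p"

lemma pq_h: "p \<in> {-1..0} \<Longrightarrow> pq h q p = pq w q p"
  unfolding pq_def[of h]
  by (rule DERIV_imp_deriv) (auto intro!: derivative_eq_intros w_has_derivative_q)

lemma pp_h: "p \<in> {-1..0} \<Longrightarrow> pp h q p = h_p q p"
  unfolding pp_def[of h] h_p_def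
  by (rule vector_derivative_within_closed_interval)
     (auto simp: has_real_derivative_iff_has_vector_derivative[symmetric]
       intro!: derivative_eq_intros H_has_derivative w_has_derivative_p)

lemma h_p_has_derivative_q:
  "p \<in> {-1..0} \<Longrightarrow> ((\<lambda>x. h_p x p) has_real_derivative pq (pp w) q p) (at q)"
  unfolding h_p_def by (auto intro!: derivative_eq_intros w_p_has_derivative_q)

lemma h_p_has_derivative_p: "p \<in> {-1..0} \<Longrightarrow>
  ((\<lambda>y. h_p q y) has_real_derivative dP (dP H) p + pp (pp w) q p) (at p within {-1..0})"
  unfolding h_p_def by (auto intro!: derivative_eq_intros H_p_has_derivative w_p_has_derivative_p)

lemma continuous_h_p: "continuous_on (UNIV \<times> {-1..0}) (\<lambda>z. h_p (fst z) (snd z))"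
  unfolding h_p_def by (intro continuous_intros continuous_H_p continuous_w_p)

lemma h_p_bounded_below:
  obtains c where "c > 0" "\<And>q p. p \<in> {-1..0} \<Longrightarrow> c \<le> h_p q p"
proof -
  obtain c where "c > 0" and c: "\<forall>q p. -1 < p \<and> p < 0 \<longrightarrow> c \<le> pp h q p"
    using solves_height_eq unfolding height_eq_def Let_def by blast
  have "c \<le> h_p q p" if "p \<in> {-1..0}" for q p
  proof (rule continuous_ge_on_closure[where S="{-1<..<0}" and f="h_p q"])
    have "closure {-1<..<0} = {-1..0::real}" by (rule closure_greaterThanLessThan) simp
    then show "continuous_on (closure {-1<..<0}) (h_p q)" "p \<in> closure {-1<..<0}"
      using continuous_on_slice[OF continuous_h_p] that by auto
  qed (use c pp_h in force)
  with \<open>c > 0\<close> show thesis by (rule that)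
qed

lemma h_p_nonzero: "p \<in> {-1..0} \<Longrightarrow> h_p q p \<noteq> 0"
  by (metis h_p_bounded_below less_le_trans less_irrefl)

definition A :: "real \<Rightarrow> real \<Rightarrow> real" where
  "A q p = - (1 + (pq h q p)\<^sup>2) / (2 * (pp h q p)\<^sup>2) + 1 / (2 * (dP H p)\<^sup>2)"

definition B :: "real \<Rightarrow> real \<Rightarrow> real" where
  "B q p = pq h q p / pp h q p"

lemma height_equation: "p \<in> {-1<..<0} \<Longrightarrow> pp A q p + pq B q p - 1 / F\<^sup>2 * dP \<rho> p * w q p = 0"
  using solves_height_eq unfolding height_eq_def Let_def A_def[abs_def] B_def[abs_def] by auto

lemma A_top: "A q 0 = 1 / F\<^sup>2 * \<rho> 0 * w q 0"
proof -
  have "(1 + (pq h q 0)\<^sup>2) / (2 * (pp h q 0)\<^sup>2) - 1 / (2 * (dP H 0)\<^sup>2) + 1 / F\<^sup>2 * \<rho> 0 * w q 0 = 0"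
    using solves_height_eq H_top unfolding height_eq_def Let_def by auto
  then show ?thesis unfolding A_def minus_divide_left[symmetric] by linarith
qed

lemma A_eq: "p \<in> {-1..0} \<Longrightarrow> A q p = - (1 + (pq w q p)\<^sup>2) / (2 * (h_p q p)\<^sup>2) + 1 / (2 * (dP H p)\<^sup>2)"
  by (simp add: A_def pq_h pp_h)

definition A_p :: "real \<Rightarrow> real \<Rightarrow> real" where
  "A_p q p = - (pq w q p * pp (pq w) q p) / (h_p q p)\<^sup>2
    + (1 + (pq w q p)\<^sup>2) * (dP (dP H) p + pp (pp w) q p) / (h_p q p)^3 - dP (dP H) p / (dP H p)^3"

definition B_q :: "real \<Rightarrow> real \<Rightarrow> real" where
  "B_q q p = pq (pq w) q p / h_p q p - pq w q p * pq (pp w) q p / (h_p q p)\<^sup>2"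

lemma A_has_derivative_p:
  assumes p: "p \<in> {-1..0}"
  shows "((\<lambda>y. A q y) has_real_derivative A_p q p) (at p within {-1..0})"
proof -
  have "((\<lambda>y. - (1 + (pq w q y)\<^sup>2) / (2 * (h_p q y)\<^sup>2) + 1 / (2 * (dP H y)\<^sup>2))
      has_real_derivative A_p q p) (at p within {-1..0})"
    unfolding A_p_def
    by (rule has_real_derivative_bernoulli_term[OF w_q_has_derivative_p h_p_has_derivative_p
          H_p_has_derivative]) (use p h_p_nonzero H_p_nonzero in auto)
  then show ?thesis
    by (rule has_field_derivative_transform_within[OF _ zero_less_one]) (use p A_eq in auto)
qed

lemma pp_A: "p \<in> {-1..0} \<Longrightarrow> pp A q p = A_p q p"
  unfolding pp_def
  by (rule vector_derivative_within_closed_interval)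
     (auto simp: has_real_derivative_iff_has_vector_derivative[symmetric] A_has_derivative_p)

lemma pq_B:
  assumes p: "p \<in> {-1..0}"
  shows "pq B q p = B_q q p"
proof -
  have "(\<lambda>x. B x p) = (\<lambda>x. pq w x p / h_p x p)"
    using pq_h[OF p] pp_h[OF p] by (simp add: B_def)
  moreover have "((\<lambda>x. pq w x p / h_p x p) has_real_derivative B_q q p) (at q)"
    using h_p_nonzero[OF p] p
    by (auto intro!: derivative_eq_intros w_q_has_derivative_q h_p_has_derivative_q
        simp: B_q_def field_simps power2_eq_square)
  ultimately show ?thesis unfolding pq_def by (simp add: DERIV_imp_deriv)
qed

lemma reduced_height_equation:
  "p \<in> {-1<..<0} \<Longrightarrow> A_p q p + B_q q p - 1 / F\<^sup>2 * dP \<rho> p * w q p = 0"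
  using height_equation[of p q] pp_A[of p q] pq_B[of p q] by simp

lemma w_qp_eq_w_pq:
  assumes p: "p \<in> {-1<..<0}"
  shows "pp (pq w) q p = pq (pp w) q p"
proof (rule mixed_partials_commute[where lo="-1" and hi=0 and f=w and fx="pq w" and fy="pp w"
      and fxy="pp (pq w)" and fyx="pq (pp w)"])
  have "(q, p) \<in> interior (UNIV \<times> {-1..0})"
    using p by (simp add: interior_Times)
  then show "isCont (\<lambda>z. pp (pq w) (fst z) (snd z)) (q, p)" "isCont (\<lambda>z. pq (pp w) (fst z) (snd z)) (q, p)"
    using continuous_on_interior[OF continuous_w_qp] continuous_on_interior[OF continuous_w_pq] by auto
qed (use p in \<open>auto intro: w_has_derivative_q w_has_derivative_p_interior
       w_q_has_derivative_p_interior w_p_has_derivative_q\<close>)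

lemma continuous_A: "continuous_on (UNIV \<times> {-1..0}) (\<lambda>z. A (fst z) (snd z))"
proof (rule continuous_on_eq)
  show "continuous_on (UNIV \<times> {-1..0})
      (\<lambda>z. - (1 + (pq w (fst z) (snd z))\<^sup>2) / (2 * (h_p (fst z) (snd z))\<^sup>2) + 1 / (2 * (dP H (snd z))\<^sup>2))"
    by (intro continuous_intros continuous_w_q continuous_h_p continuous_H_p)
       (auto simp: h_p_nonzero H_p_nonzero)
qed (auto simp: A_eq)

definition flux_density :: "real \<Rightarrow> real \<Rightarrow> real" where
  "flux_density q p = (pq w q p)\<^sup>2 / (2 * h_p q p) - (pp w q p)\<^sup>2 / (2 * h_p q p * (dP H p)\<^sup>2)
    - dP \<rho> p * (w q p)\<^sup>2 / (2 * F\<^sup>2)"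

definition flux_density_q :: "real \<Rightarrow> real \<Rightarrow> real" where
  "flux_density_q q p = pq w q p * pq (pq w) q p / h_p q p
    - (pq w q p)\<^sup>2 * pq (pp w) q p / (2 * (h_p q p)\<^sup>2)
    - pp w q p * pq (pp w) q p / (h_p q p * (dP H p)\<^sup>2)
    + (pp w q p)\<^sup>2 * pq (pp w) q p / (2 * (h_p q p)\<^sup>2 * (dP H p)\<^sup>2)
    - dP \<rho> p * w q p * pq w q p / F\<^sup>2"

definition flux :: "real \<Rightarrow> real" where
  "flux q = integral {-1..0} (flux_density q) + \<rho> 0 * (w q 0)\<^sup>2 / (2 * F\<^sup>2)"

lemma flux_density_has_derivative_q:
  assumes p: "p \<in> {-1..0}"
  shows "((\<lambda>x. flux_density x p) has_real_derivative flux_density_q q p) (at q)"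
  unfolding flux_density_def[abs_def] flux_density_q_def
  by (rule has_real_derivative_flux_density_term[OF w_q_has_derivative_q h_p_has_derivative_q
        w_p_has_derivative_q w_has_derivative_q]) (use p h_p_nonzero H_p_nonzero F_nonzero in auto)

lemma w_q_A_has_derivative_p:
  assumes p: "p \<in> {-1<..<0}"
  shows "((\<lambda>y. pq w q y * A q y) has_real_derivative - flux_density_q q p) (at p)"
proof -
  have p': "p \<in> {-1..0}" using p by simp
  have "p \<in> interior {-1..0}" using p by simp
  then have "at p within {-1..0} = at p" by (rule at_within_interior)
  then have dA: "((\<lambda>y. A q y) has_real_derivative A_p q p) (at p)"
    using A_has_derivative_p[OF p'] by simp
  have dw: "((\<lambda>y. pq w q y) has_real_derivative pp (pq w) q p) (at p)"
    using w_q_has_derivative_p_interior[of p q] p by simp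
  have "((\<lambda>y. pq w q y * A q y) has_real_derivative
      pp (pq w) q p * A q p + pq w q p * A_p q p) (at p)"
    using DERIV_mult[OF dw dA] by (simp add: mult.commute)
  moreover have "pp (pq w) q p * A q p + pq w q p * A_p q p = - flux_density_q q p"
  proof -
    have A_p: "A_p q p = - B_q q p + 1 / F\<^sup>2 * dP \<rho> p * w q p"
      using reduced_height_equation[OF p, of q] by linarith
    show ?thesis
      unfolding A_p w_qp_eq_w_pq[OF p] A_eq[OF p'] B_q_def flux_density_q_def
      by (rule flux_exactness_identity)
        (use h_p_nonzero[OF p'] H_p_nonzero[OF p'] F_nonzero in \<open>auto simp: h_p_def\<close>)
  qed
  ultimately show ?thesis by simp
qed

lemma continuous_flux_density: "continuous_on (UNIV \<times> {-1..0}) (\<lambda>z. flux_density (fst z) (snd z))"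
  unfolding flux_density_def
  by (intro continuous_intros continuous_w continuous_w_q continuous_w_p continuous_h_p
      continuous_H_p continuous_rho_p) (auto simp: h_p_nonzero H_p_nonzero F_nonzero)

lemma continuous_flux_density_q: "continuous_on (UNIV \<times> {-1..0}) (\<lambda>z. flux_density_q (fst z) (snd z))"
  unfolding flux_density_q_def
  by (intro continuous_intros continuous_w continuous_w_q continuous_w_p continuous_w_qq
      continuous_w_pq continuous_h_p continuous_H_p continuous_rho_p)
     (auto simp: h_p_nonzero H_p_nonzero F_nonzero)

lemma integral_flux_density_q:
  "integral {-1..0} (flux_density_q q) = - \<rho> 0 * w q 0 * pq w q 0 / F\<^sup>2"
proof -
  have "((\<lambda>p. - flux_density_q q p) has_integral pq w q 0 * A q 0 - pq w q (-1) * A q (-1)) {-1..0}"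
  proof (rule fundamental_theorem_of_calculus_interior)
    show "continuous_on {-1..0} (\<lambda>y. pq w q y * A q y)"
      by (intro continuous_intros continuous_on_slice[OF continuous_w_q]
          continuous_on_slice[OF continuous_A])
    show "((\<lambda>y. pq w q y * A q y) has_vector_derivative - flux_density_q q p) (at p)"
      if "p \<in> {-1<..<0}" for p
      using w_q_A_has_derivative_p[OF that] by (simp add: has_real_derivative_iff_has_vector_derivative)
  qed simp
  then have "((\<lambda>p. - (- flux_density_q q p)) has_integral
      - (pq w q 0 * A q 0 - pq w q (-1) * A q (-1))) {-1..0}"
    by (rule has_integral_neg)
  then have "integral {-1..0} (flux_density_q q) = pq w q (-1) * A q (-1) - pq w q 0 * A q 0"
    by (simp add: integral_unique)
  moreover have "pq w q (-1) = 0"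
    unfolding pq_def by (simp add: w_bottom)
  ultimately show ?thesis by (simp add: A_top)
qed

lemma flux_has_derivative_zero: "(flux has_real_derivative 0) (at q)"
proof -
  have "((\<lambda>x. integral (cbox (-1) 0) (flux_density x)) has_real_derivative
      integral (cbox (-1) 0) (flux_density_q q)) (at q within UNIV)"
  proof (rule leibniz_rule_field_derivative)
    show "flux_density x integrable_on cbox (-1) 0" for x
      using continuous_on_slice[OF continuous_flux_density]
      by (simp add: integrable_continuous_interval)
    show "continuous_on (UNIV \<times> cbox (-1) 0) (\<lambda>(x, t). flux_density_q x t)"
      using continuous_flux_density_q by (simp add: case_prod_beta)
  qed (auto intro: flux_density_has_derivative_q)
  then have "((\<lambda>x. integral {-1..0} (flux_density x)) has_real_derivative
      - \<rho> 0 * w q 0 * pq w q 0 / F\<^sup>2) (at q)"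
    by (simp add: integral_flux_density_q)
  moreover have "((\<lambda>x. \<rho> 0 * (w x 0)\<^sup>2 / (2 * F\<^sup>2)) has_real_derivative
      \<rho> 0 * (2 * w q 0 * pq w q 0) / (2 * F\<^sup>2)) (at q)"
    using F_nonzero
    by (intro derivative_eq_intros refl) (auto simp: field_simps power2_eq_square intro!: w_has_derivative_q)
  ultimately have "(flux has_real_derivative
      - \<rho> 0 * w q 0 * pq w q 0 / F\<^sup>2 + \<rho> 0 * (2 * w q 0 * pq w q 0) / (2 * F\<^sup>2)) (at q)"
    unfolding flux_def[abs_def] by (rule DERIV_add)
  moreover have "- \<rho> 0 * w q 0 * pq w q 0 / F\<^sup>2 + \<rho> 0 * (2 * w q 0 * pq w q 0) / (2 * F\<^sup>2) = 0"
    by (simp add: field_simps)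
  ultimately show ?thesis by simp
qed

lemma flux_bound:
  obtains C where "\<And>q e. (\<And>p. p \<in> {-1..0} \<Longrightarrow>
        \<bar>w q p\<bar> \<le> e \<and> \<bar>pq w q p\<bar> \<le> e \<and> \<bar>pp w q p\<bar> \<le> e)
      \<Longrightarrow> \<bar>flux q\<bar> \<le> e\<^sup>2 * C"
proof -
  obtain c where c: "c > 0" "\<And>q p. p \<in> {-1..0} \<Longrightarrow> c \<le> h_p q p"
    using h_p_bounded_below by blast
  obtain p0 where "p0 \<in> {-1..0}" and p0: "\<forall>p\<in>{-1..0}. dP H p0 \<le> dP H p"
    using continuous_attains_inf[OF compact_Icc _ continuous_on_H_p] by auto
  define m where "m = dP H p0"
  have m: "m > 0" using \<open>p0 \<in> {-1..0}\<close> H_p_pos unfolding m_def by auto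
  obtain p1 where "p1 \<in> {-1..0}" and p1: "\<forall>p\<in>{-1..0}. \<bar>dP \<rho> p\<bar> \<le> \<bar>dP \<rho> p1\<bar>"
    using continuous_attains_sup[OF compact_Icc _ continuous_on_rabs[OF continuous_on_rho_p]] by auto
  define K where "K = \<bar>dP \<rho> p1\<bar>"
  define C1 where "C1 = 1 / (2 * c) + 1 / (2 * c * m\<^sup>2) + K / (2 * F\<^sup>2)"
  show thesis
  proof (rule that[of "C1 + \<bar>\<rho> 0\<bar> / (2 * F\<^sup>2)"])
    fix q e
    assume small: "\<And>p. p \<in> {-1..0} \<Longrightarrow>
      \<bar>w q p\<bar> \<le> e \<and> \<bar>pq w q p\<bar> \<le> e \<and> \<bar>pp w q p\<bar> \<le> e"
    have "\<bar>flux_density q p\<bar> \<le> e\<^sup>2 * C1" if "p \<in> {-1..0}" for p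
      unfolding flux_density_def C1_def
      by (rule abs_flux_density_terms_le)
         (use that small c m p0 p1 F_nonzero in \<open>auto simp: m_def K_def\<close>)
    then have "\<bar>integral {-1..0} (flux_density q)\<bar> \<le> e\<^sup>2 * C1"
      using integral_bound[OF _ continuous_on_slice[OF continuous_flux_density], where B="e\<^sup>2 * C1"]
      by simp
    moreover have "(w q 0)\<^sup>2 \<le> e\<^sup>2"
      using small[of 0] by (metis abs_ge_zero atLeastAtMost_iff le_minus_one_simps(1) order_refl
          order_trans power2_abs power_mono)
    then have "\<bar>\<rho> 0 * (w q 0)\<^sup>2 / (2 * F\<^sup>2)\<bar> \<le> e\<^sup>2 * (\<bar>\<rho> 0\<bar> / (2 * F\<^sup>2))"
      by (simp add: abs_mult divide_right_mono mult_left_mono mult.commute)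
    ultimately show "\<bar>flux q\<bar> \<le> e\<^sup>2 * (C1 + \<bar>\<rho> 0\<bar> / (2 * F\<^sup>2))"
      unfolding flux_def distrib_left
      using abs_triangle_ineq[of "integral {-1..0} (flux_density q)" "\<rho> 0 * (w q 0)\<^sup>2 / (2 * F\<^sup>2)"]
      by linarith
  qed
qed

lemma flux_eq_0: "flux 0 = 0"
proof -
  obtain C where C: "\<And>q e. (\<And>p. p \<in> {-1..0} \<Longrightarrow>
        \<bar>w q p\<bar> \<le> e \<and> \<bar>pq w q p\<bar> \<le> e \<and> \<bar>pp w q p\<bar> \<le> e)
      \<Longrightarrow> \<bar>flux q\<bar> \<le> e\<^sup>2 * C"
    using flux_bound by blast
  show ?thesis
  proof (rule eq_0_if_abs_le_squares)
    fix e :: real assume "e > 0"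
    obtain M1 where M1: "\<And>q p. M1 \<le> \<bar>q\<bar> \<Longrightarrow> p \<in> {-1..0} \<Longrightarrow> \<bar>w q p\<bar> < e"
      using w_partials_vanish_at_infinity[of "[]" e] \<open>e > 0\<close> by auto
    obtain M2 where M2: "\<And>q p. M2 \<le> \<bar>q\<bar> \<Longrightarrow> p \<in> {-1..0} \<Longrightarrow> \<bar>pq w q p\<bar> < e"
      using w_partials_vanish_at_infinity[of "[True]" e] \<open>e > 0\<close> by auto
    obtain M3 where M3: "\<And>q p. M3 \<le> \<bar>q\<bar> \<Longrightarrow> p \<in> {-1..0} \<Longrightarrow> \<bar>pp w q p\<bar> < e"
      using w_partials_vanish_at_infinity[of "[False]" e] \<open>e > 0\<close> by auto
    define q where "q = \<bar>M1\<bar> + \<bar>M2\<bar> + \<bar>M3\<bar>"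
    have "\<bar>flux q\<bar> \<le> e\<^sup>2 * C"
      by (rule C) (use M1[of q] M2[of q] M3[of q] in \<open>auto simp: q_def less_imp_le\<close>)
    moreover have "flux 0 = flux q"
      using flux_has_derivative_zero by (intro DERIV_isconst_all) auto
    ultimately show "\<bar>flux 0\<bar> \<le> e\<^sup>2 * C" by simp
  qed
qed

lemma w_q_crest: "p \<in> {-1..0} \<Longrightarrow> pq w 0 p = 0"
  by (rule even_fun_deriv_zero[of "\<lambda>x. w x p"]) (auto simp: w_even w_has_derivative_q)

lemma flux_at_crest:
  "flux 0 = (1 / F\<^sup>2 * (integral {-1..0} (\<lambda>p. \<bar>dP \<rho> p\<bar> * (w 0 p)\<^sup>2) + \<rho> 0 * (w 0 0)\<^sup>2)
    - integral {-1..0} (\<lambda>p. (pp w 0 p)\<^sup>2 / ((dP H p)\<^sup>2 * pp h 0 p))) / 2"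
proof -
  define X where "X p = (pp w 0 p)\<^sup>2 / ((dP H p)\<^sup>2 * pp h 0 p)" for p
  define Y where "Y p = \<bar>dP \<rho> p\<bar> * (w 0 p)\<^sup>2" for p
  have "continuous_on {-1..0} (\<lambda>p. (pp w 0 p)\<^sup>2 / ((dP H p)\<^sup>2 * h_p 0 p))"
    by (intro continuous_intros continuous_on_slice[OF continuous_w_p] continuous_on_slice[OF continuous_h_p]
        continuous_on_H_p) (auto simp: h_p_nonzero H_p_nonzero)
  then have X: "X integrable_on {-1..0}"
    by (rule integrable_continuous_interval[OF continuous_on_eq]) (simp add: X_def pp_h)
  have Y: "Y integrable_on {-1..0}" unfolding Y_def
    by (intro integrable_continuous_interval continuous_intros continuous_on_slice[OF continuous_w]
        continuous_on_rho_p)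
  have "integral {-1..0} (flux_density 0) = integral {-1..0} (\<lambda>p. Y p / (2 * F\<^sup>2) - X p / 2)"
    using rho_p_nonpos w_q_crest pp_h
    by (intro integral_cong) (auto simp: flux_density_def X_def Y_def field_simps)
  also have "\<dots> = integral {-1..0} Y / (2 * F\<^sup>2) - integral {-1..0} X / 2"
    using X Y by (simp add: integral_diff integrable_on_divide)
  finally show ?thesis unfolding flux_def X_def Y_def using F_nonzero by (simp add: field_simps)
qed

end

theorem lemma4p6:
  fixes \<alpha> F :: real and \<rho> H :: "real \<Rightarrow> real" and w :: "real \<Rightarrow> real \<Rightarrow> real"
  assumes "0 < \<alpha>" "\<alpha> < 1"
    and "holder_int 2 \<alpha> \<rho>" "\<forall>p\<in>{-1..0}. \<rho> p > 0" "\<forall>p\<in>{-1..0}. dP \<rho> p \<le> 0"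
    and "holder_int 3 \<alpha> H" "H (-1) = 0" "H 0 = 1" "\<forall>p\<in>{-1..0}. dP H p > 0"
    and "in_X \<alpha> w"
    and "height_eq \<rho> H w F"
  shows "1 / F^2 * (integral {-1..0} (\<lambda>p. \<bar>dP \<rho> p\<bar> * (w 0 p)^2) + \<rho> 0 * (w 0 0)^2)
         = integral {-1..0} (\<lambda>p. (pp w 0 p)^2 / ((dP H p)^2 * pp (\<lambda>q p. H p + w q p) 0 p))"
proof -
  interpret height_solution \<alpha> F \<rho> H w
    by unfold_locales (use assms in auto)
  show ?thesis using flux_at_crest flux_eq_0 by simp
qed

end
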